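(* Let $R\subseteq\mathcal{D}^\Sigma$ with $n=|\Sigma|$ and let $k\ge0$ be an integer with $|R|\le|\mathcal{D}|^k$. Then there exist a set $\textup{T}$ of $k$ attributes with $\textup{T}\cap\Sigma=\emptyset$ and $\widehat R\subseteq\mathcal{D}^{\textup{T}\cup\Sigma}$ such that $$R=\pi_\Sigma\Big[\Join_{i\in\Sigma}\pi_{\textup{T}\cup\{i\}}\widehat R\Big],$$ i.e. with $\textup{T}=\{t_1,\dots,t_k\}$ and $R_i=\pi_{\textup{T}\cup\{i\}}\widehat R$, $R(x)\iff\exists t_1\dots\exists t_k\,[\bigwedge_{i\in\Sigma}R_i(t_1,\dots,t_k,x_i)]$. In particular, $R$ is projoin reducible when $k\le n-2$, and projoin reducible to binaries when $k=1$.
   Context: Attributed relation: $R\subseteq\mathcal{D}^\Sigma$, $\Sigma$ a finite set of attributes; $\pi_\Lambda R=\{a|_\Lambda:a\in R\}$. The join of $R_i\subseteq\mathcal{D}^{\Lambda_i}$ is $\{a\in\mathcal{D}^{\cup_i\Lambda_i}: a|_{\Lambda_i}\in R_i\ \forall i\}$. $R\subseteq\mathcal{D}^\Sigma$ is a projoin over a cover $\textup{T}\cup\Sigma=\Lambda_1\cup\dots\cup\Lambda_m$ (with $\textup{T}\cap\Sigma=\emptyset$; elements of $\textup{T}$ are called parameters) if there are $R^{\Lambda_i}\subseteq\mathcal{D}^{\Lambda_i}$ with $R=\pi_\Sigma[R^{\Lambda_1}\Join\dots\Join R^{\Lambda_m}]$; it is projoin reducible if this holds with $0<|\Lambda_i|<|\Sigma|$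 for all $i$, and projoin reducible to binaries if moreover all $|\Lambda_i|=2$. *)

theory Defs
  imports "HOL-Library.FuncSet" "HOL-Library.Equipollence"
begin

text \<open>Tuples over a set of attributes \<open>\<Lambda>\<close> with values in the domain \<open>D\<close> are
  extensional functions, i.e. elements of \<open>\<Lambda> \<rightarrow>\<^sub>E D\<close> (= D^\<Lambda>).
  An attributed relation on \<open>\<Lambda>\<close> is a subset of \<open>\<Lambda> \<rightarrow>\<^sub>E D\<close>.\<close>

definition proj :: "'a set \<Rightarrow> ('a \<Rightarrow> 'd) set \<Rightarrow> ('a \<Rightarrow> 'd) set" where
  "proj \<Lambda> R = (\<lambda>a. restrict a \<Lambda>) ` R"

definition join :: "'d set \<Rightarrow> 'i set \<Rightarrow> ('i \<Rightarrow> 'a set) \<Rightarrow> ('i \<Rightarrow> ('a \<Rightarrow> 'd) set) \<Rightarrow> ('a \<Rightarrow> 'd) set" where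
  "join D I \<Lambda> S = {a \<in> (\<Union>i\<in>I. \<Lambda> i) \<rightarrow>\<^sub>E D. \<forall>i\<in>I. restrict a (\<Lambda> i) \<in> S i}"

definition projoin_over :: "'d set \<Rightarrow> 'a set \<Rightarrow> ('a \<Rightarrow> 'd) set \<Rightarrow> 'a set \<Rightarrow> nat \<Rightarrow> (nat \<Rightarrow> 'a set) \<Rightarrow> bool" where
  "projoin_over D \<Sigma> R T m \<Lambda> \<longleftrightarrow>
     finite T \<and> T \<inter> \<Sigma> = {} \<and> (\<Union>i<m. \<Lambda> i) = T \<union> \<Sigma> \<and>
     (\<exists>S. (\<forall>i<m. S i \<subseteq> \<Lambda> i \<rightarrow>\<^sub>E D) \<and> R = proj \<Sigma> (join D {..<m} \<Lambda> S))"

definition projoin_reducible :: "'d set \<Rightarrow> 'a set \<Rightarrow> ('a \<Rightarrow> 'd) set \<Rightarrow> bool" where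
  "projoin_reducible D \<Sigma> R \<longleftrightarrow>
     (\<exists>T m \<Lambda>. projoin_over D \<Sigma> R T m \<Lambda> \<and>
        (\<forall>i<m. 0 < card (\<Lambda> i) \<and> card (\<Lambda> i) < card \<Sigma>))"

definition projoin_reducible_to_binaries :: "'d set \<Rightarrow> 'a set \<Rightarrow> ('a \<Rightarrow> 'd) set \<Rightarrow> bool" where
  "projoin_reducible_to_binaries D \<Sigma> R \<longleftrightarrow>
     (\<exists>T m \<Lambda>. projoin_over D \<Sigma> R T m \<Lambda> \<and>
        (\<forall>i<m. 0 < card (\<Lambda> i) \<and> card (\<Lambda> i) < card \<Sigma> \<and> card (\<Lambda> i) = 2))"

end

theory Submission
  imports Defs
begin

(* Since |R| <= |D|^k, the tuples of R can be coded injectively by tuples over k fresh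
   parameter attributes T. Extending every a in R by its code gives a relation Rh on
   T \<union> \<Sigma> in which T is a key. A tuple that agrees on T \<union> {i} with some member of Rh for
   every i must then agree with one and the same member everywhere, so Rh is the join of
   its projections to the |\<Sigma>| sets T \<union> {i}, each of size k + 1. *)

lemma lepoll_PiE_precompose:
  assumes "g ` T = I"
  shows "(I \<rightarrow>\<^sub>E D) \<lesssim> (T \<rightarrow>\<^sub>E D)"
  unfolding lepoll_def
proof (intro exI conjI)
  show "inj_on (\<lambda>h. restrict (h \<circ> g) T) (I \<rightarrow>\<^sub>E D)"
  proof (rule inj_onI)
    fix h h' assume h: "h \<in> I \<rightarrow>\<^sub>E D" and h': "h' \<in> I \<rightarrow>\<^sub>E D"
      and eq: "restrict (h \<circ> g) T = restrict (h' \<circ> g) T"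
    have "h i = h' i" if "i \<in> I" for i
      using that assms eq by (metis comp_apply imageE restrict_apply')
    then show "h = h'" using PiE_ext[OF h h'] by blast
  qed
  show "(\<lambda>h. restrict (h \<circ> g) T) ` (I \<rightarrow>\<^sub>E D) \<subseteq> T \<rightarrow>\<^sub>E D"
  proof (rule image_subsetI)
    fix h assume "h \<in> I \<rightarrow>\<^sub>E D"
    then have "h (g t) \<in> D" if "t \<in> T" for t
      using that assms by blast
    then show "restrict (h \<circ> g) T \<in> T \<rightarrow>\<^sub>E D" by simp
  qed
qed

lemma fresh_finite_set:
  assumes "infinite (UNIV :: 'a set)" "finite (\<Sigma> :: 'a set)"
  obtains T where "finite T" "card T = k" "T \<inter> \<Sigma> = {}"
proof -
  have "infinite (- \<Sigma>)" using assms by auto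
  then obtain T where "finite T" "card T = k" "T \<subseteq> - \<Sigma>"
    using infinite_arbitrarily_large by blast
  then show thesis using that by blast
qed

lemma proj_subset_PiE:
  assumes "Rh \<subseteq> A \<rightarrow>\<^sub>E D" "B \<subseteq> A"
  shows "proj B Rh \<subseteq> B \<rightarrow>\<^sub>E D"
  using assms unfolding proj_def by fastforce

lemma join_projections_eq_if_key:
  assumes ne: "\<Sigma> \<noteq> {}" and Rh: "Rh \<subseteq> (T \<union> \<Sigma>) \<rightarrow>\<^sub>E D"
    and key: "inj_on (\<lambda>h. restrict h T) Rh"
  shows "join D \<Sigma> (\<lambda>i. T \<union> {i}) (\<lambda>i. proj (T \<union> {i}) Rh) = Rh"
proof
  have cover: "(\<Union>i\<in>\<Sigma>. T \<union> {i}) = T \<union> \<Sigma>" using ne by auto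
  show "Rh \<subseteq> join D \<Sigma> (\<lambda>i. T \<union> {i}) (\<lambda>i. proj (T \<union> {i}) Rh)"
    using Rh unfolding join_def proj_def cover by auto
  show "join D \<Sigma> (\<lambda>i. T \<union> {i}) (\<lambda>i. proj (T \<union> {i}) Rh) \<subseteq> Rh"
  proof
    fix b assume "b \<in> join D \<Sigma> (\<lambda>i. T \<union> {i}) (\<lambda>i. proj (T \<union> {i}) Rh)"
    then have b: "b \<in> (T \<union> \<Sigma>) \<rightarrow>\<^sub>E D"
      and "\<forall>i\<in>\<Sigma>. \<exists>h\<in>Rh. restrict b (T \<union> {i}) = restrict h (T \<union> {i})"
      unfolding join_def proj_def cover by auto
    then obtain w where w: "\<And>i. i \<in> \<Sigma> \<Longrightarrow> w i \<in> Rh"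
      and agree: "\<And>i x. i \<in> \<Sigma> \<Longrightarrow> x \<in> T \<union> {i} \<Longrightarrow> b x = w i x"
      by (metis restrict_apply')
    obtain i0 where i0: "i0 \<in> \<Sigma>" using ne by auto
    have "restrict (w i) T = restrict (w i0) T" if "i \<in> \<Sigma>" for i
      using agree that i0 by (intro restrict_ext) (metis UnI1)
    then have same: "w i = w i0" if "i \<in> \<Sigma>" for i
      using key w that i0 by (auto dest: inj_onD)
    have "b x = w i0 x" if "x \<in> T \<union> \<Sigma>" for x
    proof (cases "x \<in> T")
      case True
      then show ?thesis using agree[OF i0] by simp
    next
      case False
      then have "x \<in> \<Sigma>" using that by simp
      then show ?thesis using agree[of x x] same by simp
    qed
    moreover have "w i0 \<in> (T \<union> \<Sigma>) \<rightarrow>\<^sub>E D" using w[OF i0] Rh by blast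
    ultimately have "b = w i0" using PiE_ext[OF b] by metis
    then show "b \<in> Rh" using w[OF i0] by simp
  qed
qed

lemma obtain_key_extension:
  assumes R: "R \<subseteq> \<Sigma> \<rightarrow>\<^sub>E D" and disj: "T \<inter> \<Sigma> = {}" and size: "R \<lesssim> (T \<rightarrow>\<^sub>E D)"
  obtains Rh where "Rh \<subseteq> (T \<union> \<Sigma>) \<rightarrow>\<^sub>E D" "inj_on (\<lambda>h. restrict h T) Rh" "proj \<Sigma> Rh = R"
proof -
  obtain c where c: "inj_on c R" "c ` R \<subseteq> T \<rightarrow>\<^sub>E D"
    using size unfolding lepoll_def by blast
  define glue where "glue a = (\<lambda>x. if x \<in> \<Sigma> then a x else c a x)" for a
  have glue_\<Sigma>: "restrict (glue a) \<Sigma> = a" if "a \<in> R" for a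
  proof -
    have "restrict (glue a) \<Sigma> = restrict a \<Sigma>"
      by (intro restrict_ext) (simp add: glue_def)
    also have "\<dots> = a" using that R by (blast intro: PiE_restrict)
    finally show ?thesis .
  qed
  have glue_T: "restrict (glue a) T = c a" if "a \<in> R" for a
  proof -
    have "restrict (glue a) T = restrict (c a) T"
      using disj by (intro restrict_ext) (auto simp: glue_def)
    also have "\<dots> = c a" using that c(2) by (blast intro: PiE_restrict)
    finally show ?thesis .
  qed
  show thesis
  proof
    show "glue ` R \<subseteq> (T \<union> \<Sigma>) \<rightarrow>\<^sub>E D"
      using R c(2) by (fastforce simp: glue_def)
    show "inj_on (\<lambda>h. restrict h T) (glue ` R)"
      using c(1) glue_T by (auto simp: inj_on_def)
    show "proj \<Sigma> (glue ` R) = R"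
      using glue_\<Sigma> by (force simp: proj_def image_image)
  qed
qed

lemma projoin_over_reindex:
  assumes "finite T" "T \<inter> \<Sigma> = {}" and e: "bij_betw e {..<m} I"
    and cover: "(\<Union>i\<in>I. \<Lambda> i) = T \<union> \<Sigma>" and S: "\<forall>i\<in>I. S i \<subseteq> \<Lambda> i \<rightarrow>\<^sub>E D"
  shows "projoin_over D \<Sigma> (proj \<Sigma> (join D I \<Lambda> S)) T m (\<Lambda> \<circ> e)"
proof -
  have I: "I = e ` {..<m}" using e by (simp add: bij_betw_def)
  have "join D {..<m} (\<Lambda> \<circ> e) (S \<circ> e) = join D I \<Lambda> S"
    unfolding join_def I by auto
  moreover have "(\<Union>j<m. (\<Lambda> \<circ> e) j) = T \<union> \<Sigma>" using cover I by auto
  moreover have "\<forall>j<m. (S \<circ> e) j \<subseteq> (\<Lambda> \<circ> e) j \<rightarrow>\<^sub>E D" using S I by auto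
  ultimately show ?thesis
    using assms(1,2) unfolding projoin_over_def by metis
qed

theorem theorem21:
  fixes D :: "'d set" and \<Sigma> :: "'a set" and R :: "('a \<Rightarrow> 'd) set" and k :: nat
  assumes attrs: "infinite (UNIV :: 'a set)"
    and fin: "finite \<Sigma>" and ne: "\<Sigma> \<noteq> {}"
    and rel: "R \<subseteq> \<Sigma> \<rightarrow>\<^sub>E D"
    and size: "R \<lesssim> ({..<k} \<rightarrow>\<^sub>E D)"
  shows "(\<exists>T Rh. finite T \<and> card T = k \<and> T \<inter> \<Sigma> = {} \<and> Rh \<subseteq> (T \<union> \<Sigma>) \<rightarrow>\<^sub>E D \<and>
            R = proj \<Sigma> (join D \<Sigma> (\<lambda>i. T \<union> {i}) (\<lambda>i. proj (T \<union> {i}) Rh)))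
         \<and> (k + 2 \<le> card \<Sigma> \<longrightarrow> projoin_reducible D \<Sigma> R)
         \<and> (k = 1 \<and> 3 \<le> card \<Sigma> \<longrightarrow> projoin_reducible_to_binaries D \<Sigma> R)"
proof -
  obtain T where T: "finite T" "card T = k" "T \<inter> \<Sigma> = {}"
    using fresh_finite_set[OF attrs fin] .
  obtain g where "bij_betw g T {..<k}"
    using ex_bij_betw_finite_nat[OF T(1)] T(2) by (auto simp: atLeast0LessThan)
  then have "R \<lesssim> (T \<rightarrow>\<^sub>E D)"
    using size lepoll_PiE_precompose lepoll_trans by (metis bij_betw_imp_surj_on)
  then obtain Rh where Rh: "Rh \<subseteq> (T \<union> \<Sigma>) \<rightarrow>\<^sub>E D" "inj_on (\<lambda>h. restrict h T) Rh" "proj \<Sigma> Rh = R"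
    using obtain_key_extension[OF rel T(3)] by blast
  have R_eq: "R = proj \<Sigma> (join D \<Sigma> (\<lambda>i. T \<union> {i}) (\<lambda>i. proj (T \<union> {i}) Rh))"
    using join_projections_eq_if_key[OF ne Rh(1,2)] Rh(3) by simp
  obtain e where e: "bij_betw e {..<card \<Sigma>} \<Sigma>"
    using ex_bij_betw_nat_finite[OF fin] by (auto simp: atLeast0LessThan)
  have projoin: "projoin_over D \<Sigma> R T (card \<Sigma>) ((\<lambda>i. T \<union> {i}) \<circ> e)"
    unfolding R_eq
  proof (rule projoin_over_reindex[OF T(1,3) e])
    show "(\<Union>i\<in>\<Sigma>. T \<union> {i}) = T \<union> \<Sigma>" using ne by auto
    show "\<forall>i\<in>\<Sigma>. proj (T \<union> {i}) Rh \<subseteq> T \<union> {i} \<rightarrow>\<^sub>E D"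
      by (auto intro!: proj_subset_PiE[OF Rh(1)])
  qed
  have cards: "\<forall>j<card \<Sigma>. card (((\<lambda>i. T \<union> {i}) \<circ> e) j) = k + 1"
    using bij_betwE[OF e] T by (auto simp: card_insert_if)
  have "k + 2 \<le> card \<Sigma> \<longrightarrow> projoin_reducible D \<Sigma> R"
    unfolding projoin_reducible_def using projoin cards by fastforce
  moreover have "k = 1 \<and> 3 \<le> card \<Sigma> \<longrightarrow> projoin_reducible_to_binaries D \<Sigma> R"
    unfolding projoin_reducible_to_binaries_def using projoin cards by fastforce
  ultimately show ?thesis using R_eq T Rh(1) by blast
qed

end
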